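(* Let $(L,\le,(\sqsubseteq_\alpha)_{\alpha<\kappa})$ be a model of Axioms 1–4. Let $\alpha\le\kappa$ be an ordinal and let $(x_\beta)_{\beta<\alpha}$ be a family of elements of $L$ such that $x_\beta=_\beta x_\gamma$ and $x_\beta\le x_\gamma$ whenever $\beta<\gamma<\alpha$. Let $x=\bigvee_{\beta<\alpha}x_\beta$. Then $x_\beta=_\beta x$ for all $\beta<\alpha$.
   Context: Setting (model of Axioms 1–4). Let $(L,\le)$ be a complete lattice with join operation $\bigvee$ and least element $\perp$. Let $\kappa>0$ be an ordinal, and for each ordinal $\alpha<\kappa$ let $\sqsubseteq_\alpha$ be a preorder on $L$. Derived relation: $x=_\alpha y$ means $x\sqsubseteq_\alpha y$ and $y\sqsubseteq_\alpha x$. Derived set, for $x\in L$ and $\alpha<\kappa$: $(x]_\alpha=\{y\in L:\forall\beta<\alpha,\ x=_\beta y\}$. For a set $X$, $X\sqsubseteq_\alpha y$ means $x\sqsubseteq_\alpha y$ for all $x\in X$. The structure is a model of Axioms 1–4 if: - (A1) for all $\alpha<\beta<\kappa$, $x\sqsubseteq_\beta y$ implies $x=_\alpha y$; - (A2) $\bigcap_{\alpha<\kappa}=_\alpha$ is the identity relation on $L$; - (A3) for every $x\in L$, every $\alpha<\kappa$ and every $X\subseteq(x]_\alpha$ there is $y\in(x]_\alpha$ with $X\sqsubseteq_\alpha y$ such that for all $z\in(x]_\alpha$ with $X\sqsubseteq_\alpha z$ we have $y\sqsubseteq_\alpha z$ and $y\le z$; - (A4) for every nonempty $X\subseteq L$,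 every $\alpha<\kappa$ and every $y\in L$, if $y=_\alpha x$ for all $x\in X$ then $y=_\alpha\bigvee X$. *)

theory Defs
  imports Main
begin

(* Ordinals below kappa are the elements of a well-ordered type 'k (kappa = its
   order type, automatically > 0 since types are nonempty). *)

definition eqa :: "('k \<Rightarrow> 'a \<Rightarrow> 'a \<Rightarrow> bool) \<Rightarrow> 'k \<Rightarrow> 'a \<Rightarrow> 'a \<Rightarrow> bool" where
  "eqa sq a x y \<longleftrightarrow> sq a x y \<and> sq a y x"

definition seg :: "('k::order \<Rightarrow> 'a \<Rightarrow> 'a \<Rightarrow> bool) \<Rightarrow> 'k \<Rightarrow> 'a \<Rightarrow> 'a set" where
  "seg sq a x = {y. \<forall>b<a. eqa sq b x y}"

definition model14 :: "('k::wellorder \<Rightarrow> 'a::complete_lattice \<Rightarrow> 'a \<Rightarrow> bool) \<Rightarrow> bool" where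
  "model14 sq \<longleftrightarrow>
     (\<forall>a. reflp (sq a) \<and> transp (sq a)) \<and>
     (\<forall>a b x y. a < b \<longrightarrow> sq b x y \<longrightarrow> eqa sq a x y) \<and>
     (\<forall>x y. (\<forall>a. eqa sq a x y) \<longrightarrow> x = y) \<and>
     (\<forall>x a X. X \<subseteq> seg sq a x \<longrightarrow>
        (\<exists>y\<in>seg sq a x. (\<forall>w\<in>X. sq a w y) \<and>
           (\<forall>z\<in>seg sq a x. (\<forall>w\<in>X. sq a w z) \<longrightarrow> sq a y z \<and> y \<le> z))) \<and>
     (\<forall>X a y. X \<noteq> {} \<longrightarrow> (\<forall>x\<in>X. eqa sq a y x) \<longrightarrow> eqa sq a y (Sup X))"

end

theory Submission
  imports Defs
begin

text \<open>Since the chain is increasing, its supremum is already the supremum of the tail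
  starting at \<open>\<beta>\<close>, every member of which is \<open>=\<^sub>\<beta>\<close> to \<open>x\<^sub>\<beta>\<close>; Axiom 4 transfers this
  relation to the supremum. Downward closure of the index set is not needed.\<close>

lemma model14_eqa_refl:
  assumes "model14 sq"
  shows "eqa sq a x x"
  using assms unfolding model14_def eqa_def by (simp add: reflpD)

lemma model14_eqa_Sup:
  assumes "model14 sq" and "X \<noteq> {}" and "\<And>x. x \<in> X \<Longrightarrow> eqa sq a y x"
  shows "eqa sq a y (Sup X)"
proof -
  have "\<forall>X a y. X \<noteq> {} \<longrightarrow> (\<forall>x\<in>X. eqa sq a y x) \<longrightarrow> eqa sq a y (Sup X)"
    using assms(1) unfolding model14_def by (elim conjE)
  then show ?thesis
    using assms(2,3) by blast
qed

lemma SUP_tail_eq: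
  fixes f :: "'i::linorder \<Rightarrow> 'a::complete_lattice"
  assumes "b \<in> A" and "\<And>c. c \<in> A \<Longrightarrow> c < b \<Longrightarrow> f c \<le> f b"
  shows "(SUP c\<in>{c\<in>A. b \<le> c}. f c) = (SUP c\<in>A. f c)"
proof (rule antisym)
  show "(SUP c\<in>{c\<in>A. b \<le> c}. f c) \<le> (SUP c\<in>A. f c)"
    by (rule SUP_subset_mono) simp_all
  have fb: "f b \<le> (SUP c\<in>{c\<in>A. b \<le> c}. f c)"
    using \<open>b \<in> A\<close> by (intro SUP_upper) simp
  show "(SUP c\<in>A. f c) \<le> (SUP c\<in>{c\<in>A. b \<le> c}. f c)"
  proof (rule SUP_least)
    fix c assume "c \<in> A"
    show "f c \<le> (SUP c\<in>{c\<in>A. b \<le> c}. f c)"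
    proof (cases "b \<le> c")
      case True
      with \<open>c \<in> A\<close> show ?thesis by (intro SUP_upper) simp
    next
      case False
      then have "f c \<le> f b" using \<open>c \<in> A\<close> assms(2) by (simp add: not_le)
      then show ?thesis using fb by (rule order_trans)
    qed
  qed
qed

theorem mainTheorem9:
  fixes sq :: "'k::wellorder \<Rightarrow> 'a::complete_lattice \<Rightarrow> 'a \<Rightarrow> bool"
    and A :: "'k set" and xs :: "'k \<Rightarrow> 'a"
  assumes "model14 sq"
    and "\<And>b c. c \<in> A \<Longrightarrow> b < c \<Longrightarrow> b \<in> A"
    and "\<And>b c. b \<in> A \<Longrightarrow> c \<in> A \<Longrightarrow> b < c \<Longrightarrow> eqa sq b (xs b) (xs c) \<and> xs b \<le> xs c"
  shows "\<forall>b\<in>A. eqa sq b (xs b) (SUP c\<in>A. xs c)"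
proof
  fix b assume "b \<in> A"
  have tail: "eqa sq b (xs b) (xs c)" if "c \<in> A" "b \<le> c" for c
    using that assms(3)[OF \<open>b \<in> A\<close>] model14_eqa_refl[OF assms(1)]
    by (cases "b = c") auto
  have "eqa sq b (xs b) (SUP c\<in>{c\<in>A. b \<le> c}. xs c)"
    using \<open>b \<in> A\<close> tail by (intro model14_eqa_Sup[OF assms(1)]) auto
  moreover have "(SUP c\<in>{c\<in>A. b \<le> c}. xs c) = (SUP c\<in>A. xs c)"
    using \<open>b \<in> A\<close> assms(3) by (intro SUP_tail_eq) auto
  ultimately show "eqa sq b (xs b) (SUP c\<in>A. xs c)"
    by simp
qed

end
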